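(* Let $n\ge3$ and let $i,j,k,l\in\{1,\dots,n\}$ be pairwise distinct indices (whenever they occur). Then in $VP_n$: 1) if $\max\{i,j\}<\max\{k,l\}$ and $\varepsilon=\pm1$, then $\lambda_{kl}^{\lambda_{ij}^{\varepsilon}}=\lambda_{kl}$; 2) if $i<j<k$ or $j<i<k$: $\lambda_{ik}^{\lambda_{ij}}=\lambda_{kj}^{\lambda_{ij}}\lambda_{ik}\lambda_{kj}^{-1}$ and $\lambda_{ik}^{\lambda_{ij}^{-1}}=\lambda_{kj}^{-1}\lambda_{ik}\lambda_{kj}^{\lambda_{ij}^{-1}}$; 3) if $i<j<k$ or $j<i<k$: $\lambda_{ki}^{\lambda_{ij}}=\lambda_{kj}\lambda_{ki}\lambda_{kj}^{-\lambda_{ij}}$ and $\lambda_{ki}^{\lambda_{ij}^{-1}}=\lambda_{kj}^{-\lambda_{ij}^{-1}}\lambda_{ki}\lambda_{kj}$; 4) if $i<j<k$ or $j<i<k$: $\lambda_{jk}^{\lambda_{ij}}=\lambda_{ik}\lambda_{jk}\lambda_{kj}\lambda_{ik}^{-1}\lambda_{kj}^{-\lambda_{ij}}$ and $\lambda_{jk}^{\lambda_{ij}^{-1}}=\lambda_{kj}^{-\lambda_{ij}^{-1}}\lambda_{ik}^{-1}\lambda_{kj}\lambda_{jk}\lambda_{ik}$.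
   Context: Notation: $a^b=b^{-1}ab$, $a^{-b}=(a^b)^{-1}$. The virtual braid group $VB_n$ is the group with generators $\sigma_1,\dots,\sigma_{n-1},\rho_1,\dots,\rho_{n-1}$ and defining relations: $\sigma_i\sigma_{i+1}\sigma_i=\sigma_{i+1}\sigma_i\sigma_{i+1}$, $\sigma_i\sigma_j=\sigma_j\sigma_i$ ($|i-j|\ge2$); $\rho_i\rho_{i+1}\rho_i=\rho_{i+1}\rho_i\rho_{i+1}$, $\rho_i\rho_j=\rho_j\rho_i$ ($|i-j|\ge2$), $\rho_i^2=1$; $\sigma_i\rho_j=\rho_j\sigma_i$ ($|i-j|\ge2$), $\rho_i\rho_{i+1}\sigma_i=\sigma_{i+1}\rho_i\rho_{i+1}$. $VP_n$ is the kernel of the homomorphism $VB_n\to S_n$ sending $\sigma_i,\rho_i$ to $(i,i+1)$. Define $\lambda_{i,i+1}=\rho_i\sigma_i^{-1}$, $\lambda_{i+1,i}=\sigma_i^{-1}\rho_i$, and for $1\le i<j-1\le n-1$: $\lambda_{ij}=\rho_{j-1}\cdots\rho_{i+1}\lambda_{i,i+1}\rho_{i+1}\cdots\rho_{j-1}$, $\lambda_{ji}=\rho_{j-1}\cdots\rho_{i+1}\lambda_{i+1,i}\rho_{i+1}\cdots\rho_{j-1}$. *)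

theory Defs
  imports Main
begin

text \<open>Generators of the virtual braid group: S i stands for sigma_i, R i for rho_i.\<close>
datatype gen = S nat | R nat

text \<open>Words in the generators and their inverses: (g, False) is g, (g, True) is g inverse.\<close>
type_synonym word = "(gen \<times> bool) list"

definition winv :: "word \<Rightarrow> word" where
  "winv w = rev (map (\<lambda>(g, e). (g, \<not> e)) w)"

text \<open>Conjugation convention of the paper: a^b = b^{-1} a b.\<close>
definition wconj :: "word \<Rightarrow> word \<Rightarrow> word" where
  "wconj a b = winv b @ a @ b"

definition sg :: "nat \<Rightarrow> word" where "sg i = [(S i, False)]"
definition rh :: "nat \<Rightarrow> word" where "rh i = [(R i, False)]"

definition vb_rels :: "nat \<Rightarrow> (word \<times> word) set" where
  "vb_rels n =
     {(sg i @ sg (i+1) @ sg i, sg (i+1) @ sg i @ sg (i+1)) | i. 1 \<le> i \<and> i + 1 \<le> n - 1}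
   \<union> {(sg i @ sg j, sg j @ sg i) | i j. 1 \<le> i \<and> i \<le> n - 1 \<and> 1 \<le> j \<and> j \<le> n - 1 \<and> (i + 2 \<le> j \<or> j + 2 \<le> i)}
   \<union> {(rh i @ rh (i+1) @ rh i, rh (i+1) @ rh i @ rh (i+1)) | i. 1 \<le> i \<and> i + 1 \<le> n - 1}
   \<union> {(rh i @ rh j, rh j @ rh i) | i j. 1 \<le> i \<and> i \<le> n - 1 \<and> 1 \<le> j \<and> j \<le> n - 1 \<and> (i + 2 \<le> j \<or> j + 2 \<le> i)}
   \<union> {(rh i @ rh i, []) | i. 1 \<le> i \<and> i \<le> n - 1}
   \<union> {(sg i @ rh j, rh j @ sg i) | i j. 1 \<le> i \<and> i \<le> n - 1 \<and> 1 \<le> j \<and> j \<le> n - 1 \<and> (i + 2 \<le> j \<or> j + 2 \<le> i)}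
   \<union> {(rh i @ rh (i+1) @ sg i, sg (i+1) @ rh i @ rh (i+1)) | i. 1 \<le> i \<and> i + 1 \<le> n - 1}"

inductive vb_eq :: "nat \<Rightarrow> word \<Rightarrow> word \<Rightarrow> bool" where
  refl: "vb_eq n w w"
| sym: "vb_eq n u v \<Longrightarrow> vb_eq n v u"
| trans: "vb_eq n u v \<Longrightarrow> vb_eq n v w \<Longrightarrow> vb_eq n u w"
| cong: "vb_eq n u v \<Longrightarrow> vb_eq n (a @ u @ b) (a @ v @ b)"
| cancel: "vb_eq n [(g, e), (g, \<not> e)] []"
| rel: "(u, v) \<in> vb_rels n \<Longrightarrow> vb_eq n u v"

definition rhos_up :: "nat \<Rightarrow> nat \<Rightarrow> word" where
  "rhos_up a b = map (\<lambda>k. (R k, False)) [a..<b+1]"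

definition lam :: "nat \<Rightarrow> nat \<Rightarrow> word" where
  "lam i j =
    (if i < j then rev (rhos_up (i+1) (j-1)) @ rh i @ winv (sg i) @ rhos_up (i+1) (j-1)
     else rev (rhos_up (j+1) (i-1)) @ winv (sg j) @ rh j @ rhos_up (j+1) (i-1))"

end

theory Submission
  imports Defs "HOL-Combinatorics.Transposition"
begin

text \<open>Parts 2)--4) hold in every group in which
  \<open>\<lambda>\<^sub>i\<^sub>j \<lambda>\<^sub>i\<^sub>k \<lambda>\<^sub>j\<^sub>k = \<lambda>\<^sub>j\<^sub>k \<lambda>\<^sub>i\<^sub>k \<lambda>\<^sub>i\<^sub>j\<close> for distinct \<open>i, j, k\<close>, and part 1) holds
  because \<open>\<lambda>\<^sub>i\<^sub>j \<lambda>\<^sub>k\<^sub>l = \<lambda>\<^sub>k\<^sub>l \<lambda>\<^sub>i\<^sub>j\<close> for distinct \<open>i, j, k, l\<close>. Both families are proved in \<open>VB\<^sub>n\<close>: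
  \<open>\<rho>\<^sub>k \<lambda>\<^sub>i\<^sub>j \<rho>\<^sub>k = \<lambda>\<^bsub>s(i) s(j)\<^esub>\<close> for the transposition \<open>s = (k k+1)\<close>, and
  products of adjacent transpositions carry \<open>(1, 2, 3)\<close> and \<open>(1, 2, 3, 4)\<close> to any tuple of
  distinct indices, so only \<open>\<lambda>\<^sub>1\<^sub>2 \<lambda>\<^sub>1\<^sub>3 \<lambda>\<^sub>2\<^sub>3 = \<lambda>\<^sub>2\<^sub>3 \<lambda>\<^sub>1\<^sub>3 \<lambda>\<^sub>1\<^sub>2\<close> and
  \<open>\<lambda>\<^sub>1\<^sub>2 \<lambda>\<^sub>3\<^sub>4 = \<lambda>\<^sub>3\<^sub>4 \<lambda>\<^sub>1\<^sub>2\<close> have to be checked by hand. Reversal of words is an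
  anti-automorphism of \<open>VB\<^sub>n\<close> exchanging \<open>\<lambda>\<^sub>i\<^sub>j\<close> and \<open>\<lambda>\<^sub>j\<^sub>i\<close>, which halves the case
  analysis for the conjugation formula.\<close>

section \<open>Group calculus on words\<close>

lemma winv_Nil [simp]: "winv [] = []"
  by (simp add: winv_def)

lemma winv_append [simp]: "winv (u @ v) = winv v @ winv u"
  by (simp add: winv_def)

lemma winv_Cons [simp]: "winv ((g, e) # w) = winv w @ [(g, \<not> e)]"
  by (simp add: winv_def)

lemma winv_winv [simp]: "winv (winv w) = w"
  by (induction w) (auto simp: winv_def)

declare vb_eq.trans [trans]

lemma vb_eq_commute: "vb_eq n u v \<longleftrightarrow> vb_eq n v u"
  by (blast intro: vb_eq.sym)

lemma vb_eq_append: "vb_eq n u u' \<Longrightarrow> vb_eq n v v' \<Longrightarrow> vb_eq n (u @ v) (u' @ v')"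
  by (metis vb_eq.trans vb_eq.cong append_Nil append_Nil2)

lemma vb_eq_append_winv: "vb_eq n (w @ winv w) []"
proof (induction w)
  case Nil
  show ?case by (simp add: vb_eq.refl)
next
  case (Cons x w)
  obtain g e where x: "x = (g, e)" by fastforce
  have "vb_eq n ([(g, e)] @ (w @ winv w) @ [(g, \<not> e)]) ([(g, e)] @ [] @ [(g, \<not> e)])"
    using Cons.IH by (rule vb_eq.cong)
  also have "vb_eq n ([(g, e)] @ [] @ [(g, \<not> e)]) []"
    using vb_eq.cancel by simp
  finally show ?case by (simp add: x)
qed

lemma vb_eq_winv_append: "vb_eq n (winv w @ w) []"
  using vb_eq_append_winv [of n "winv w"] by simp

lemma vb_eq_delete_append_winv: "vb_eq n (u @ w @ winv w @ v) (u @ v)"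
  using vb_eq.cong [OF vb_eq_append_winv [of n w], of u v] by simp

lemma vb_eq_delete_winv_append: "vb_eq n (u @ winv w @ w @ v) (u @ v)"
  using vb_eq.cong [OF vb_eq_winv_append [of n w], of u v] by simp

lemma vb_eq_cancel_left: "vb_eq n (a @ u) (a @ v) \<longleftrightarrow> vb_eq n u v"
proof
  assume "vb_eq n (a @ u) (a @ v)"
  from vb_eq.cong [OF this, of "winv a" "[]"]
  have "vb_eq n (winv a @ a @ u) (winv a @ a @ v)" by simp
  then show "vb_eq n u v"
    using vb_eq_delete_winv_append [of n "[]" a u] vb_eq_delete_winv_append [of n "[]" a v]
    by simp (blast intro: vb_eq.trans vb_eq.sym)
qed (use vb_eq.cong [of n u v a "[]"] in simp)

lemma vb_eq_cancel_right: "vb_eq n (u @ b) (v @ b) \<longleftrightarrow> vb_eq n u v"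
proof
  assume "vb_eq n (u @ b) (v @ b)"
  from vb_eq.cong [OF this, of "[]" "winv b"]
  have "vb_eq n (u @ b @ winv b) (v @ b @ winv b)" by simp
  then show "vb_eq n u v"
    using vb_eq_delete_append_winv [of n u b "[]"] vb_eq_delete_append_winv [of n v b "[]"]
    by simp (blast intro: vb_eq.trans vb_eq.sym)
qed (use vb_eq.cong [of n u v "[]" b] in simp)

lemma vb_eq_append_left_iff: "vb_eq n (a @ u) v \<longleftrightarrow> vb_eq n u (winv a @ v)"
proof -
  have "vb_eq n (a @ u) v \<longleftrightarrow> vb_eq n (winv a @ a @ u) (winv a @ v)"
    by (simp add: vb_eq_cancel_left)
  also have "\<dots> \<longleftrightarrow> vb_eq n u (winv a @ v)"
    using vb_eq_delete_winv_append [of n "[]" a u] by simp (blast intro: vb_eq.trans vb_eq.sym)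
  finally show ?thesis .
qed

lemma vb_eq_append_right_iff: "vb_eq n (u @ b) v \<longleftrightarrow> vb_eq n u (v @ winv b)"
proof -
  have "vb_eq n (u @ b) v \<longleftrightarrow> vb_eq n (u @ b @ winv b) (v @ winv b)"
    using vb_eq_cancel_right [of n "u @ b" "winv b" v] by simp
  also have "\<dots> \<longleftrightarrow> vb_eq n u (v @ winv b)"
    using vb_eq_delete_append_winv [of n u b "[]"] by simp (blast intro: vb_eq.trans vb_eq.sym)
  finally show ?thesis .
qed

lemma vb_eq_winv:
  assumes "vb_eq n u v"
  shows "vb_eq n (winv u) (winv v)"
proof -
  have "vb_eq n (u @ winv v) []"
    using assms vb_eq_append_right_iff [of n u "winv v" "[]"] by simp
  then show ?thesis
    using vb_eq_append_left_iff [of n u "winv v" "[]"] vb_eq_commute by simp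
qed

lemma vb_eq_intertwine_winv:
  assumes "vb_eq n (a @ x) (y @ a)"
  shows "vb_eq n (a @ winv x) (winv y @ a)"
proof -
  have "vb_eq n x (winv a @ y @ a)"
    using assms vb_eq_append_left_iff [of n a x "y @ a"] by simp
  then have "vb_eq n (winv x) (winv a @ winv y @ a)"
    by (auto dest: vb_eq_winv)
  then show ?thesis
    using vb_eq_append_left_iff [of n a "winv x" "winv y @ a"] by simp
qed

lemma wconj_append: "vb_eq n (wconj u b @ wconj v b) (wconj (u @ v) b)"
  using vb_eq_delete_append_winv [of n "winv b @ u" b "v @ b"] by (simp add: wconj_def)

lemma wconj_commuting:
  assumes "vb_eq n (x @ y) (y @ x)"
  shows "vb_eq n (wconj x y) x" and "vb_eq n (wconj x (winv y)) x"
proof -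
  show "vb_eq n (wconj x y) x"
    using assms vb_eq_append_left_iff [of n "winv y" "x @ y" x] by (simp add: wconj_def)
  show "vb_eq n (wconj x (winv y)) x"
    using assms vb_eq_append_right_iff [of n "y @ x" "winv y" x]
    by (simp add: wconj_def vb_eq_commute)
qed

lemma rel3_wconj_by_middle:
  assumes "vb_eq n (A @ B @ C) (C @ B @ A)"
  shows "vb_eq n (wconj A B) (wconj C B @ A @ winv C)"
proof -
  have "vb_eq n (A @ B) (C @ B @ A @ winv C)"
    using assms vb_eq_append_right_iff [of n "A @ B" C "C @ B @ A"] by simp
  then show ?thesis
    using vb_eq_cancel_left [of n "winv B" "A @ B"] by (simp add: wconj_def)
qed

lemma rel3_wconj_inv_by_middle:
  assumes "vb_eq n (A @ B @ C) (C @ B @ A)"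
  shows "vb_eq n (wconj A (winv B)) (winv C @ A @ wconj C (winv B))"
proof -
  have "vb_eq n (B @ A) (winv C @ A @ B @ C)"
    using assms vb_eq_append_left_iff [of n C "B @ A" "A @ B @ C"] vb_eq_commute by simp
  then show ?thesis
    using vb_eq_cancel_right [of n "B @ A" "winv B" "winv C @ A @ B @ C"] by (simp add: wconj_def)
qed

lemma rel3_wconj_by_last:
  assumes "vb_eq n (A @ B @ C) (C @ B @ A)"
  shows "vb_eq n (wconj A C) (B @ A @ winv (wconj B C))"
proof -
  have "vb_eq n (wconj (A @ B) C) (B @ A)"
    using assms vb_eq_append_left_iff [of n "winv C" "A @ B @ C" "B @ A"] by (simp add: wconj_def)
  then have "vb_eq n (wconj A C @ wconj B C) (B @ A)"
    using wconj_append by (blast intro: vb_eq.trans)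
  then show ?thesis
    using vb_eq_append_right_iff [of n "wconj A C" "wconj B C" "B @ A"] by simp
qed

lemma rel3_wconj_inv_by_last:
  assumes "vb_eq n (A @ B @ C) (C @ B @ A)"
  shows "vb_eq n (wconj A (winv C)) (winv (wconj B (winv C)) @ A @ B)"
proof -
  have "vb_eq n (A @ B) (wconj (B @ A) (winv C))"
    using assms vb_eq_append_right_iff [of n "A @ B" C "C @ B @ A"] by (simp add: wconj_def)
  then have "vb_eq n (A @ B) (wconj B (winv C) @ wconj A (winv C))"
    using wconj_append by (blast intro: vb_eq.trans vb_eq.sym)
  then show ?thesis
    using vb_eq_append_left_iff [of n "winv (wconj B (winv C))" "A @ B" "wconj A (winv C)"]
    by (simp add: vb_eq_commute)
qed

lemma rel3_pair_wconj:
  assumes ABC: "vb_eq n (A @ B @ C) (C @ B @ A)" and BAD: "vb_eq n (B @ A @ D) (D @ A @ B)"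
  shows "vb_eq n (wconj D B) (A @ D @ C @ winv A @ winv (wconj C B))"
proof -
  have "vb_eq n (D @ C @ B @ A) (D @ A @ B @ C)"
    using vb_eq.cong [OF ABC, of D "[]"] by (simp add: vb_eq_commute)
  also have "vb_eq n (D @ A @ B @ C) (B @ A @ D @ C)"
    using vb_eq.cong [OF BAD, of "[]" C] by (simp add: vb_eq_commute)
  finally have "vb_eq n (wconj (D @ C) B) (A @ D @ C @ winv A)"
    using vb_eq_append_left_iff [of n "winv B" "D @ C @ B" "A @ D @ C @ winv A"]
      vb_eq_append_right_iff [of n "D @ C @ B" A "B @ A @ D @ C"]
    by (simp add: wconj_def)
  then have "vb_eq n (wconj D B @ wconj C B) (A @ D @ C @ winv A)"
    using wconj_append by (blast intro: vb_eq.trans)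
  then show ?thesis
    using vb_eq_append_right_iff [of n "wconj D B" "wconj C B" "A @ D @ C @ winv A"] by simp
qed

lemma rel3_pair_wconj_inv:
  assumes ABC: "vb_eq n (A @ B @ C) (C @ B @ A)" and BAD: "vb_eq n (B @ A @ D) (D @ A @ B)"
  shows "vb_eq n (wconj D (winv B)) (winv (wconj C (winv B)) @ winv A @ C @ D @ A)"
proof -
  have "vb_eq n (A @ B @ C @ D) (C @ B @ A @ D)"
    using vb_eq.cong [OF ABC, of "[]" D] by simp
  also have "vb_eq n (C @ B @ A @ D) (C @ D @ A @ B)"
    using vb_eq.cong [OF BAD, of C "[]"] by simp
  finally have "vb_eq n (wconj (C @ D) (winv B)) (winv A @ C @ D @ A)"
    using vb_eq_append_left_iff [of n A "B @ C @ D @ winv B" "C @ D @ A"]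
      vb_eq_append_right_iff [of n "A @ B @ C @ D" "winv B" "C @ D @ A"]
    by (simp add: wconj_def)
  then have "vb_eq n (wconj C (winv B) @ wconj D (winv B)) (winv A @ C @ D @ A)"
    using wconj_append by (blast intro: vb_eq.trans)
  then show ?thesis
    using vb_eq_append_left_iff [of n "wconj C (winv B)" "wconj D (winv B)" "winv A @ C @ D @ A"]
    by simp
qed

section \<open>Defining relations and reversal of words\<close>

lemma rho_square: "k \<in> {1..<n} \<Longrightarrow> vb_eq n (rh k @ rh k) []"
  by (rule vb_eq.rel) (simp add: vb_rels_def rh_def sg_def; arith)

lemma rho_commute:
  "k \<in> {1..<n} \<Longrightarrow> m \<in> {1..<n} \<Longrightarrow> k + 2 \<le> m \<or> m + 2 \<le> k \<Longrightarrow>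
    vb_eq n (rh k @ rh m) (rh m @ rh k)"
  by (rule vb_eq.rel) (simp add: vb_rels_def rh_def sg_def; arith)

lemma sigma_commute:
  "k \<in> {1..<n} \<Longrightarrow> m \<in> {1..<n} \<Longrightarrow> k + 2 \<le> m \<or> m + 2 \<le> k \<Longrightarrow>
    vb_eq n (sg k @ sg m) (sg m @ sg k)"
  by (rule vb_eq.rel) (simp add: vb_rels_def rh_def sg_def; arith)

lemma sigma_rho_commute:
  "k \<in> {1..<n} \<Longrightarrow> m \<in> {1..<n} \<Longrightarrow> k + 2 \<le> m \<or> m + 2 \<le> k \<Longrightarrow>
    vb_eq n (sg m @ rh k) (rh k @ sg m)"
  by (rule vb_eq.rel) (simp add: vb_rels_def rh_def sg_def; arith)

lemma rho_braid:
  "1 \<le> k \<Longrightarrow> k + 1 < n \<Longrightarrow> vb_eq n (rh k @ rh (k+1) @ rh k) (rh (k+1) @ rh k @ rh (k+1))"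
  by (rule vb_eq.rel) (simp add: vb_rels_def rh_def sg_def; arith)

lemma sigma_braid:
  "1 \<le> k \<Longrightarrow> k + 1 < n \<Longrightarrow> vb_eq n (sg k @ sg (k+1) @ sg k) (sg (k+1) @ sg k @ sg (k+1))"
  by (rule vb_eq.rel) (simp add: vb_rels_def rh_def sg_def; arith)

lemma rho_rho_sigma:
  "1 \<le> k \<Longrightarrow> k + 1 < n \<Longrightarrow> vb_eq n (rh k @ rh (k+1) @ sg k) (sg (k+1) @ rh k @ rh (k+1))"
  by (rule vb_eq.rel) (simp add: vb_rels_def rh_def sg_def; arith)

lemma rho_square_delete: "k \<in> {1..<n} \<Longrightarrow> vb_eq n (u @ rh k @ rh k @ v) (u @ v)"
  using vb_eq.cong [OF rho_square, of k n u v] by simp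

lemma sigma_rho_rho:
  assumes "1 \<le> k" "k + 1 < n"
  shows "vb_eq n (sg k @ rh (k+1) @ rh k) (rh (k+1) @ rh k @ sg (k+1))"
proof -
  have "vb_eq n (rh (k+1) @ rh k @ (rh k @ rh (k+1) @ sg k) @ rh (k+1) @ rh k)
      (sg k @ rh (k+1) @ rh k)"
    using assms rho_square_delete [of k n "rh (k+1)" "rh (k+1) @ sg k @ rh (k+1) @ rh k"]
      rho_square_delete [of "k+1" n "[]" "sg k @ rh (k+1) @ rh k"]
    by simp (blast intro: vb_eq.trans)
  moreover have "vb_eq n (rh (k+1) @ rh k @ (rh k @ rh (k+1) @ sg k) @ rh (k+1) @ rh k)
      (rh (k+1) @ rh k @ (sg (k+1) @ rh k @ rh (k+1)) @ rh (k+1) @ rh k)"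
    using vb_eq.cong [OF rho_rho_sigma [OF assms], of "rh (k+1) @ rh k" "rh (k+1) @ rh k"] by simp
  moreover have "vb_eq n (rh (k+1) @ rh k @ (sg (k+1) @ rh k @ rh (k+1)) @ rh (k+1) @ rh k)
      (rh (k+1) @ rh k @ sg (k+1))"
    using assms rho_square_delete [of "k+1" n "rh (k+1) @ rh k @ sg (k+1) @ rh k" "rh k"]
      rho_square_delete [of k n "rh (k+1) @ rh k @ sg (k+1)" "[]"]
    by simp (blast intro: vb_eq.trans)
  ultimately show ?thesis
    by (blast intro: vb_eq.trans vb_eq.sym)
qed

text \<open>Read backwards, every defining relation is again a defining relation, except the mixed
  one, which becomes \<open>sigma_rho_rho\<close>.\<close>

lemma vb_eq_rev: "vb_eq n u v \<Longrightarrow> vb_eq n (rev u) (rev v)"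
proof (induction rule: vb_eq.induct)
  case (refl n w)
  then show ?case by (rule vb_eq.refl)
next
  case (sym n u v)
  then show ?case by (blast intro: vb_eq.sym)
next
  case (trans n u v w)
  then show ?case by (blast intro: vb_eq.trans)
next
  case (cong n u v a b)
  then show ?case by (simp add: vb_eq.cong)
next
  case (cancel n g e)
  then show ?case using vb_eq.cancel [of n g "\<not> e"] by simp
next
  case (rel u v n)
  then show ?case
    unfolding vb_rels_def
  proof (elim UnE CollectE exE conjE)
    fix i assume "(u, v) = (sg i @ sg (i+1) @ sg i, sg (i+1) @ sg i @ sg (i+1))"
      "1 \<le> i" "i + 1 \<le> n - 1"
    then show ?thesis using sigma_braid [of i n] by (auto simp: sg_def)
  next
    fix i j assume "(u, v) = (sg i @ sg j, sg j @ sg i)" "1 \<le> i" "i \<le> n - 1" "1 \<le> j" "j \<le> n - 1"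
      "i + 2 \<le> j \<or> j + 2 \<le> i"
    then show ?thesis using sigma_commute [of j n i] by (auto simp: sg_def)
  next
    fix i assume "(u, v) = (rh i @ rh (i+1) @ rh i, rh (i+1) @ rh i @ rh (i+1))"
      "1 \<le> i" "i + 1 \<le> n - 1"
    then show ?thesis using rho_braid [of i n] by (auto simp: rh_def)
  next
    fix i j assume "(u, v) = (rh i @ rh j, rh j @ rh i)" "1 \<le> i" "i \<le> n - 1" "1 \<le> j" "j \<le> n - 1"
      "i + 2 \<le> j \<or> j + 2 \<le> i"
    then show ?thesis using rho_commute [of j n i] by (auto simp: rh_def)
  next
    fix i assume "(u, v) = (rh i @ rh i, [])" "1 \<le> i" "i \<le> n - 1"
    then show ?thesis using rho_square [of i n] by (auto simp: rh_def)
  next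
    fix i j assume "(u, v) = (sg i @ rh j, rh j @ sg i)" "1 \<le> i" "i \<le> n - 1" "1 \<le> j" "j \<le> n - 1"
      "i + 2 \<le> j \<or> j + 2 \<le> i"
    then show ?thesis using sigma_rho_commute [of j n i] by (auto simp: sg_def rh_def vb_eq_commute)
  next
    fix i assume "(u, v) = (rh i @ rh (i+1) @ sg i, sg (i+1) @ rh i @ rh (i+1))"
      "1 \<le> i" "i + 1 \<le> n - 1"
    then show ?thesis using sigma_rho_rho [of i n] by (auto simp: sg_def rh_def)
  qed
qed

definition gen_index :: "gen \<times> bool \<Rightarrow> nat" where
  "gen_index x = (case fst x of S m \<Rightarrow> m | R m \<Rightarrow> m)"

definition far_letters :: "nat \<Rightarrow> gen \<times> bool \<Rightarrow> gen \<times> bool \<Rightarrow> bool" where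
  "far_letters n x y \<longleftrightarrow> gen_index x \<in> {1..<n} \<and> gen_index y \<in> {1..<n} \<and>
     (gen_index x + 2 \<le> gen_index y \<or> gen_index y + 2 \<le> gen_index x)"

lemma far_letters_commute:
  assumes "far_letters n x y"
  shows "vb_eq n [x, y] [y, x]"
proof -
  obtain g e h f where xy: "x = (g, e)" "y = (h, f)" by fastforce
  have pos: "vb_eq n [(g, False), (h, False)] [(h, False), (g, False)]"
  proof (cases g; cases h)
    fix a b assume "g = S a" "h = S b"
    then show ?thesis
      using assms sigma_commute [of a n b] by (auto simp: xy far_letters_def gen_index_def sg_def)
  next
    fix a b assume "g = S a" "h = R b"
    then show ?thesis
      using assms sigma_rho_commute [of b n a]
      by (auto simp: xy far_letters_def gen_index_def sg_def rh_def)
  next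
    fix a b assume "g = R a" "h = S b"
    then show ?thesis
      using assms sigma_rho_commute [of a n b]
      by (auto simp: xy far_letters_def gen_index_def sg_def rh_def vb_eq_commute)
  next
    fix a b assume "g = R a" "h = R b"
    then show ?thesis
      using assms rho_commute [of a n b] by (auto simp: xy far_letters_def gen_index_def rh_def)
  qed
  have flip_right: "vb_eq n [(g', e'), (h', True)] [(h', True), (g', e')]"
    if "vb_eq n [(g', e'), (h', False)] [(h', False), (g', e')]" for g' e' h'
    using vb_eq_intertwine_winv [of n "[(g', e')]" "[(h', False)]" "[(h', False)]"] that
    by (simp add: vb_eq_commute)
  have flip_left: "vb_eq n [(g, True), (h, False)] [(h, False), (g, True)]"
    using flip_right [of h False g] pos by (simp add: vb_eq_commute)
  show ?thesis
    using pos flip_left flip_right [of g False h] flip_right [of g True h]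
    by (cases e; cases f) (simp_all add: xy)
qed

lemma far_words_commute:
  assumes "\<forall>x\<in>set u. \<forall>y\<in>set w. far_letters n x y"
  shows "vb_eq n (u @ w) (w @ u)"
  using assms
proof (induction u)
  case Nil
  show ?case by (simp add: vb_eq.refl)
next
  case (Cons x u)
  have "vb_eq n ([x] @ w) (w @ [x])"
    using Cons.prems
  proof (induction w)
    case Nil
    show ?case by (simp add: vb_eq.refl)
  next
    case (Cons y w)
    have xw: "vb_eq n ([x] @ w) (w @ [x])"
      using Cons.IH Cons.prems by simp
    have "vb_eq n (x # y # w) (y # x # w)"
      using far_letters_commute [of n x y] Cons.prems vb_eq.cong [of n "[x, y]" "[y, x]" "[]" w]
      by simp
    also have "vb_eq n (y # x # w) (y # w @ [x])"
      using vb_eq.cong [OF xw, of "[y]" "[]"] by simp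
    finally show ?case by simp
  qed
  then have "vb_eq n ([x] @ w @ u) (w @ [x] @ u)"
    using vb_eq.cong [of n "[x] @ w" "w @ [x]" "[]" u] by simp
  moreover have "vb_eq n ([x] @ u @ w) ([x] @ w @ u)"
    using Cons vb_eq.cong [of n "u @ w" "w @ u" "[x]" "[]"] by simp
  ultimately show ?case
    by (auto intro: vb_eq.trans)
qed

section \<open>Conjugating \<open>\<lambda>\<^sub>i\<^sub>j\<close> by \<open>\<rho>\<^sub>k\<close>\<close>

definition rhos :: "nat list \<Rightarrow> word" where
  "rhos ks = map (\<lambda>k. (R k, False)) ks"

lemma rhos_Nil [simp]: "rhos [] = []"
  and rhos_Cons [simp]: "rhos (k # ks) = rh k @ rhos ks"
  and rhos_append [simp]: "rhos (xs @ ys) = rhos xs @ rhos ys"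
  and rev_rhos [simp]: "rev (rhos ks) = rhos (rev ks)"
  by (simp_all add: rhos_def rh_def rev_map)

lemma rev_rh [simp]: "rev (rh k) = rh k"
  by (simp add: rh_def)

lemma rhos_rev_append_rhos:
  assumes "set ks \<subseteq> {1..<n}"
  shows "vb_eq n (rhos (rev ks) @ rhos ks) []"
  using assms
proof (induction ks)
  case Nil
  show ?case by (simp add: vb_eq.refl)
next
  case (Cons k ks)
  then have "vb_eq n (rhos (rev ks) @ rh k @ rh k @ rhos ks) (rhos (rev ks) @ rhos ks)"
    by (simp add: rho_square_delete)
  with Cons show ?case
    by (auto intro: vb_eq.trans)
qed

lemma rho_rhos_commute:
  assumes "k \<in> {1..<n}" and "\<forall>m\<in>set ks. m \<in> {1..<n} \<and> (k + 2 \<le> m \<or> m + 2 \<le> k)"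
  shows "vb_eq n (rh k @ rhos ks) (rhos ks @ rh k)"
  using assms
  by (intro far_words_commute) (auto simp: rh_def rhos_def far_letters_def gen_index_def)

lemma rho_conj_involution:
  assumes "k \<in> {1..<n}" and "vb_eq n (rh k @ u @ rh k) v"
  shows "vb_eq n (rh k @ v @ rh k) u"
proof -
  have "vb_eq n (rh k @ v @ rh k) (rh k @ (rh k @ u @ rh k) @ rh k)"
    using vb_eq.cong [OF assms(2), of "rh k" "rh k"] by (simp add: vb_eq_commute)
  also have "vb_eq n (rh k @ (rh k @ u @ rh k) @ rh k) u"
    using assms(1) rho_square_delete [of k n "[]" "u @ rh k @ rh k"]
      rho_square_delete [of k n u "[]"]
    by simp (blast intro: vb_eq.trans)
  finally show ?thesis .
qed

lemma lam_less: "i < j \<Longrightarrow> lam i j = rhos (rev [i+1..<j]) @ rh i @ winv (sg i) @ rhos [i+1..<j]"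
  by (simp add: lam_def rhos_up_def rhos_def rev_map)

lemma rev_lam: "i \<noteq> j \<Longrightarrow> rev (lam i j) = lam j i"
  by (auto simp: lam_def rhos_up_def rev_map rh_def sg_def winv_def)

lemma lam_Suc_right: "i < j \<Longrightarrow> lam i (j + 1) = rh j @ lam i j @ rh j"
  by (simp add: lam_less)

lemma gen_index_lam: "i \<noteq> j \<Longrightarrow> x \<in> set (lam i j) \<Longrightarrow> gen_index x \<in> {min i j..<max i j}"
  by (auto simp: lam_def rhos_up_def rh_def sg_def winv_def gen_index_def split: if_splits)

lemma rho_conj_lam_far:
  assumes "k \<in> {1..<n}" "i \<in> {1..n}" "j \<in> {1..n}" "i \<noteq> j" "k + 2 \<le> min i j \<or> max i j < k"
  shows "vb_eq n (rh k @ lam i j @ rh k) (lam i j)"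
proof -
  have "\<forall>x\<in>set (rh k). \<forall>y\<in>set (lam i j). far_letters n x y"
    using assms gen_index_lam [OF assms(4)]
    by (fastforce simp: rh_def far_letters_def gen_index_def)
  from vb_eq.cong [OF far_words_commute [OF this], of "[]" "rh k"]
  have "vb_eq n (rh k @ lam i j @ rh k) (lam i j @ rh k @ rh k)" by simp
  also have "vb_eq n (lam i j @ rh k @ rh k) (lam i j)"
    using assms(1) rho_square_delete [of k n "lam i j" "[]"] by simp
  finally show ?thesis .
qed

lemma rho_rho_sigma_inv:
  "1 \<le> k \<Longrightarrow> k + 1 < n \<Longrightarrow>
    vb_eq n (rh k @ rh (k+1) @ winv (sg k)) (winv (sg (k+1)) @ rh k @ rh (k+1))"
  using vb_eq_intertwine_winv [of n "rh k @ rh (k+1)" "sg k" "sg (k+1)"] rho_rho_sigma by simp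

lemma rho_conj_lam_adjacent:
  assumes "1 \<le> k" "k + 1 < n"
  shows "vb_eq n (rh k @ lam (k+1) (k+2) @ rh k) (lam k (k+2))"
proof -
  let ?p = "rh k" and ?q = "rh (k+1)" and ?s = "winv (sg k)" and ?t = "winv (sg (k+1))"
  have lams: "lam (k+1) (k+2) = ?q @ ?t" "lam k (k+2) = ?q @ ?p @ ?s @ ?q"
    by (simp_all add: lam_less upt_conv_Cons)
  have "vb_eq n (?p @ ?q @ ?t @ ?p) (?p @ ?q @ ?t @ ?p @ ?q @ ?q)"
    using assms rho_square_delete [of "k+1" n "?p @ ?q @ ?t @ ?p" "[]"] by (simp add: vb_eq_commute)
  also have "vb_eq n (?p @ ?q @ ?t @ ?p @ ?q @ ?q) (?p @ ?q @ ?p @ ?q @ ?s @ ?q)"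
    using vb_eq.cong [OF rho_rho_sigma_inv [OF assms], of "?p @ ?q" ?q] by (simp add: vb_eq_commute)
  also have "vb_eq n (?p @ ?q @ ?p @ ?q @ ?s @ ?q) (?q @ ?p @ ?q @ ?q @ ?s @ ?q)"
    using vb_eq.cong [OF rho_braid [OF assms], of "[]" "?q @ ?s @ ?q"] by simp
  also have "vb_eq n (?q @ ?p @ ?q @ ?q @ ?s @ ?q) (?q @ ?p @ ?s @ ?q)"
    using assms rho_square_delete [of "k+1" n "?q @ ?p" "?s @ ?q"] by simp
  finally show ?thesis
    unfolding lams by simp
qed

lemma rho_conj_lam_Suc_left:
  assumes "1 \<le> k" "k + 1 < j" "j \<le> n"
  shows "vb_eq n (rh k @ lam (k+1) j @ rh k) (lam k j)"
proof -
  let ?P = "rhos (rev [k+2..<j])" and ?P' = "rhos [k+2..<j]"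
  have lams: "lam (k+1) j = ?P @ lam (k+1) (k+2) @ ?P'" "lam k j = ?P @ lam k (k+2) @ ?P'"
    using assms by (simp_all add: lam_less upt_conv_Cons)
  have P: "vb_eq n (rh k @ ?P) (?P @ rh k)" and P': "vb_eq n (rh k @ ?P') (?P' @ rh k)"
    using assms by (auto intro!: rho_rhos_commute)
  have "vb_eq n (rh k @ ?P @ lam (k+1) (k+2) @ ?P' @ rh k)
      (?P @ rh k @ lam (k+1) (k+2) @ ?P' @ rh k)"
    using vb_eq.cong [OF P, of "[]" "lam (k+1) (k+2) @ ?P' @ rh k"] by simp
  also have "vb_eq n (?P @ rh k @ lam (k+1) (k+2) @ ?P' @ rh k)
      (?P @ rh k @ lam (k+1) (k+2) @ rh k @ ?P')"
    using vb_eq.cong [OF P', of "?P @ rh k @ lam (k+1) (k+2)" "[]"] by (simp add: vb_eq_commute)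
  also have "vb_eq n (?P @ rh k @ lam (k+1) (k+2) @ rh k @ ?P') (?P @ lam k (k+2) @ ?P')"
    using assms vb_eq.cong [OF rho_conj_lam_adjacent, of k n ?P ?P'] by simp
  finally show ?thesis
    unfolding lams by simp
qed

lemma rho_shift_rhos_rev:
  assumes "1 \<le> a" "a \<le> k" "k + 2 \<le> b" "b \<le> n"
  shows "vb_eq n (rh k @ rhos (rev [a..<b])) (rhos (rev [a..<b]) @ rh (k+1))"
proof -
  let ?P = "rhos (rev [k+2..<b])" and ?Q = "rhos (rev [a..<k])"
  have "[a..<b] = [a..<k] @ [k..<b]"
    using assms upt_add_eq_append [of a k "b - k"] by simp
  also have "[k..<b] = [k, k+1] @ [k+2..<b]"
    using assms by (simp add: upt_conv_Cons)
  finally have split: "rhos (rev [a..<b]) = ?P @ rh (k+1) @ rh k @ ?Q"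
    by simp
  have P: "vb_eq n (rh k @ ?P) (?P @ rh k)" and Q: "vb_eq n (rh (k+1) @ ?Q) (?Q @ rh (k+1))"
    using assms by (auto intro!: rho_rhos_commute)
  have "vb_eq n (rh k @ ?P @ rh (k+1) @ rh k @ ?Q) (?P @ rh k @ rh (k+1) @ rh k @ ?Q)"
    using vb_eq.cong [OF P, of "[]" "rh (k+1) @ rh k @ ?Q"] by simp
  also have "vb_eq n (?P @ rh k @ rh (k+1) @ rh k @ ?Q) (?P @ rh (k+1) @ rh k @ rh (k+1) @ ?Q)"
    using assms vb_eq.cong [OF rho_braid, of k n ?P ?Q] by simp
  also have "vb_eq n (?P @ rh (k+1) @ rh k @ rh (k+1) @ ?Q) (?P @ rh (k+1) @ rh k @ ?Q @ rh (k+1))"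
    using vb_eq.cong [OF Q, of "?P @ rh (k+1) @ rh k" "[]"] by simp
  finally show ?thesis
    using split by simp
qed

lemma rho_conj_lam_inside:
  assumes "1 \<le> i" "i < k" "k + 1 < j" "j \<le> n"
  shows "vb_eq n (rh k @ lam i j @ rh k) (lam i j)"
proof -
  let ?Rv = "rhos (rev [i+1..<j])" and ?Rf = "rhos [i+1..<j]" and ?X = "rh i @ winv (sg i)"
  have left: "vb_eq n (rh k @ ?Rv) (?Rv @ rh (k+1))"
    using assms by (intro rho_shift_rhos_rev) auto
  have right: "vb_eq n (rh (k+1) @ ?Rf) (?Rf @ rh k)"
    using vb_eq_rev [OF left] by (simp add: vb_eq_commute)
  have "\<forall>x\<in>set (rh (k+1)). \<forall>y\<in>set ?X. far_letters n x y"
    using assms by (auto simp: rh_def sg_def winv_def far_letters_def gen_index_def)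
  note middle = far_words_commute [OF this]
  have "vb_eq n (rh k @ lam i j @ rh k) (?Rv @ rh (k+1) @ ?X @ ?Rf @ rh k)"
    using assms vb_eq.cong [OF left, of "[]" "?X @ ?Rf @ rh k"] by (simp add: lam_less)
  also have "vb_eq n (?Rv @ rh (k+1) @ ?X @ ?Rf @ rh k) (?Rv @ ?X @ rh (k+1) @ ?Rf @ rh k)"
    using vb_eq.cong [OF middle, of ?Rv "?Rf @ rh k"] by simp
  also have "vb_eq n (?Rv @ ?X @ rh (k+1) @ ?Rf @ rh k) (?Rv @ ?X @ ?Rf @ rh k @ rh k)"
    using vb_eq.cong [OF right, of "?Rv @ ?X" "rh k"] by simp
  also have "vb_eq n (?Rv @ ?X @ ?Rf @ rh k @ rh k) (lam i j)"
    using assms rho_square_delete [of k n "?Rv @ ?X @ ?Rf" "[]"] by (simp add: lam_less)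
  finally show ?thesis .
qed

definition rho_perm :: "nat \<Rightarrow> nat \<Rightarrow> nat" where
  "rho_perm k = Transposition.transpose k (k + 1)"

lemma rho_conj_lam_less:
  assumes k: "k \<in> {1..<n}" and ij: "1 \<le> i" "i < j" "j \<le> n"
  shows "vb_eq n (rh k @ lam i j @ rh k) (lam (rho_perm k i) (rho_perm k j))"
proof -
  consider (far) "k + 2 \<le> i \<or> j < k" | (Suc_left) "i = k + 1" | (adjacent) "i = k" "j = k + 1"
    | (left) "i = k" "k + 1 < j" | (right) "i < k" "j = k" | (Suc_right) "i < k" "j = k + 1"
    | (inside) "i < k" "k + 1 < j"
    using ij by linarith
  then show ?thesis
  proof cases
    case far
    then show ?thesis
      using rho_conj_lam_far [of k n i j] k ij by (auto simp: rho_perm_def transpose_def)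
  next
    case Suc_left
    then show ?thesis
      using rho_conj_lam_Suc_left [of k j n] k ij by (simp add: rho_perm_def)
  next
    case adjacent
    then show ?thesis
      using k rho_square_delete [of k n "[]" "winv (sg k) @ rh k"]
      by (simp add: rho_perm_def lam_def rhos_up_def)
  next
    case left
    then show ?thesis
      using rho_conj_involution [OF k rho_conj_lam_Suc_left [of k j n]] k ij
      by (simp add: rho_perm_def)
  next
    case right
    then show ?thesis
      using lam_Suc_right [of i k] by (simp add: rho_perm_def vb_eq.refl)
  next
    case Suc_right
    then show ?thesis
      using rho_conj_involution [OF k, of "lam i k" "lam i (k+1)"] lam_Suc_right [of i k]
      by (simp add: rho_perm_def vb_eq.refl)
  next
    case inside
    then show ?thesis
      using rho_conj_lam_inside [of i k j n] ij by (simp add: rho_perm_def)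
  qed
qed

lemma rho_conj_lam:
  assumes "k \<in> {1..<n}" "i \<in> {1..n}" "j \<in> {1..n}" "i \<noteq> j"
  shows "vb_eq n (rh k @ lam i j @ rh k) (lam (rho_perm k i) (rho_perm k j))"
proof (cases "i < j")
  case True
  then show ?thesis
    using rho_conj_lam_less assms by auto
next
  case False
  then have "vb_eq n (rh k @ lam j i @ rh k) (lam (rho_perm k j) (rho_perm k i))"
    using rho_conj_lam_less assms by auto
  moreover have "rho_perm k j \<noteq> rho_perm k i"
    using assms by (auto simp: rho_perm_def dest: transpose_eq_imp_eq)
  ultimately show ?thesis
    using vb_eq_rev assms by (fastforce simp: rev_lam)
qed

section \<open>Moving indices by adjacent transpositions\<close>

lemma rhos_conj_lam:
  assumes "set ks \<subseteq> {1..<n}" "i \<in> {1..n}" "j \<in> {1..n}" "i \<noteq> j"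
  shows "vb_eq n (rhos (rev ks) @ lam i j @ rhos ks)
    (lam (fold rho_perm ks i) (fold rho_perm ks j))"
  using assms
proof (induction ks arbitrary: i j)
  case Nil
  show ?case by (simp add: vb_eq.refl)
next
  case (Cons k ks)
  have k: "k \<in> {1..<n}"
    using Cons.prems by simp
  have "vb_eq n (rhos (rev ks) @ (rh k @ lam i j @ rh k) @ rhos ks)
      (rhos (rev ks) @ lam (rho_perm k i) (rho_perm k j) @ rhos ks)"
    using rho_conj_lam [OF k] Cons.prems by (intro vb_eq.cong) simp
  also have "vb_eq n (rhos (rev ks) @ lam (rho_perm k i) (rho_perm k j) @ rhos ks)
      (lam (fold rho_perm ks (rho_perm k i)) (fold rho_perm ks (rho_perm k j)))"
    using Cons.prems k by (intro Cons.IH) (auto simp: rho_perm_def transpose_def)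
  finally show ?case by simp
qed

definition lam_indices :: "nat \<Rightarrow> (nat \<times> nat) set" where
  "lam_indices n = {(i, j). i \<in> {1..n} \<and> j \<in> {1..n} \<and> i \<noteq> j}"

definition lams :: "(nat \<times> nat) list \<Rightarrow> word" where
  "lams ps = concat (map (\<lambda>(i, j). lam i j) ps)"

lemma rhos_conj_lams:
  assumes "set ks \<subseteq> {1..<n}" "set ps \<subseteq> lam_indices n"
  shows "vb_eq n (rhos (rev ks) @ lams ps @ rhos ks)
    (lams (map (map_prod (fold rho_perm ks) (fold rho_perm ks)) ps))"
  using assms(2)
proof (induction ps)
  case Nil
  show ?case
    using rhos_rev_append_rhos [OF assms(1)] by (simp add: lams_def)
next
  case (Cons p ps)
  obtain i j where p: "p = (i, j)" by fastforce
  have ij: "i \<in> {1..n}" "j \<in> {1..n}" "i \<noteq> j" and ps: "set ps \<subseteq> lam_indices n"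
    using Cons.prems by (auto simp: lam_indices_def p)
  have inv: "vb_eq n [] (rhos ks @ rhos (rev ks))"
    using assms(1) rhos_rev_append_rhos [of "rev ks" n] by (simp add: vb_eq_commute)
  have "vb_eq n (rhos (rev ks) @ lams (p # ps) @ rhos ks)
      ((rhos (rev ks) @ lam i j @ rhos ks) @ (rhos (rev ks) @ lams ps @ rhos ks))"
    using vb_eq.cong [OF inv, of "rhos (rev ks) @ lam i j" "lams ps @ rhos ks"]
    by (simp add: lams_def p)
  also have "vb_eq n ((rhos (rev ks) @ lam i j @ rhos ks) @ (rhos (rev ks) @ lams ps @ rhos ks))
      (lams (map (map_prod (fold rho_perm ks) (fold rho_perm ks)) (p # ps)))"
    using vb_eq_append [OF rhos_conj_lam [OF assms(1) ij] Cons.IH [OF ps]] by (simp add: lams_def p)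
  finally show ?case .
qed

lemma lams_relation_transport:
  assumes "set ks \<subseteq> {1..<n}" "set ps \<subseteq> lam_indices n" "set qs \<subseteq> lam_indices n"
    and "vb_eq n (lams ps) (lams qs)"
  shows "vb_eq n (lams (map (map_prod (fold rho_perm ks) (fold rho_perm ks)) ps))
    (lams (map (map_prod (fold rho_perm ks) (fold rho_perm ks)) qs))"
proof -
  have "vb_eq n (rhos (rev ks) @ lams ps @ rhos ks) (rhos (rev ks) @ lams qs @ rhos ks)"
    using assms(4) by (rule vb_eq.cong)
  then show ?thesis
    using rhos_conj_lams [OF assms(1,2)] rhos_conj_lams [OF assms(1,3)]
    by (blast intro: vb_eq.trans vb_eq.sym)
qed

lemma fold_rho_perm_upt:
  "p \<le> q \<Longrightarrow> fold rho_perm [p..<q] y = (if y = p then q else if p < y \<and> y \<le> q then y - 1 else y)"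
proof (induction q)
  case 0
  then show ?case by simp
next
  case (Suc q)
  show ?case
  proof (cases "p \<le> q")
    case True
    then show ?thesis
      using Suc.IH by (auto simp: rho_perm_def transpose_def)
  next
    case False
    with Suc.prems show ?thesis by simp
  qed
qed

lemma rho_perms_realise_injection:
  assumes "distinct xs" "set xs \<subseteq> {b<..n}"
  shows "\<exists>ks. set ks \<subseteq> {1..<n} \<and> (\<forall>y\<le>b. fold rho_perm ks y = y) \<and>
    map (fold rho_perm ks) [b+1..<b+1+length xs] = xs"
  using assms
proof (induction "length xs" arbitrary: xs b)
  case 0
  then show ?case by (intro exI [of _ "[]"]) simp
next
  case (Suc m)
  then obtain a ys where xs: "xs = a # ys" and m: "m = length ys"
    by (cases xs) auto
  have a: "b < a" "a \<le> n" and ys: "\<forall>y\<in>set ys. b < y \<and> y \<le> n \<and> y \<noteq> a"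
    using Suc.prems xs by auto
  \<comment> \<open>\<open>lift\<close> inverts \<open>fold rho_perm [b+1..<a]\<close>, which sends \<open>b+1\<close> to \<open>a\<close> and shifts \<open>(b+1, a]\<close> down\<close>
  define lift where "lift y = (if y < a then y + 1 else y)" for y
  have "inj_on lift (set ys)"
    using ys by (auto simp: inj_on_def lift_def split: if_splits; metis Suc_lessI)
  then have "distinct (map lift ys)" and "set (map lift ys) \<subseteq> {b+1<..n}"
    using Suc.prems a ys by (auto simp: xs lift_def distinct_map)
  then obtain ks where ks: "set ks \<subseteq> {1..<n}" "\<forall>y\<le>b+1. fold rho_perm ks y = y"
    "map (fold rho_perm ks) [b+2..<b+2+m] = map lift ys"
    using Suc.hyps(1) [of "map lift ys" "b+1"] m by auto
  let ?f = "fold rho_perm (ks @ [b+1..<a])"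
  have "map ?f [b+2..<b+2+m] = map (fold rho_perm [b+1..<a]) (map lift ys)"
    unfolding fold_append ks(3) [symmetric] by simp
  also have "\<dots> = ys"
    using a ys by (auto simp: lift_def fold_rho_perm_upt intro!: map_idI)
  finally have "map ?f [b+2..<b+2+m] = ys" .
  moreover have "?f (b+1) = a"
    using a ks(2) by (simp add: fold_rho_perm_upt)
  moreover have "[b+1..<b+1+length xs] = (b+1) # [b+2..<b+2+m]"
    by (simp add: xs m upt_conv_Cons del: upt_Suc)
  ultimately have "map ?f [b+1..<b+1+length xs] = xs"
    by (simp add: xs)
  moreover have "\<forall>y\<le>b. ?f y = y"
    using ks(2) a by (simp add: fold_rho_perm_upt)
  moreover have "set (ks @ [b+1..<a]) \<subseteq> {1..<n}"
    using ks(1) a by auto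
  ultimately show ?case by blast
qed

section \<open>The defining relations of \<open>VP\<^sub>n\<close>\<close>

lemma lam_rel3_base:
  assumes "3 \<le> n"
  shows "vb_eq n (lam 1 2 @ lam 1 3 @ lam 2 3) (lam 2 3 @ lam 1 3 @ lam 1 2)"
proof -
  let ?p = "rh 1" and ?q = "rh 2" and ?s = "winv (sg 1)" and ?t = "winv (sg 2)"
  have k: "1 \<le> (1::nat)" "1 + 1 < n"
    using assms by auto
  have lams: "lam 1 2 = ?p @ ?s" "lam 1 3 = ?q @ ?p @ ?s @ ?q" "lam 2 3 = ?q @ ?t"
    by (simp_all add: lam_less numeral_eq_Suc)
  have pqs: "vb_eq n (?p @ ?q @ ?s) (?t @ ?p @ ?q)"
    using rho_rho_sigma_inv [OF k] by (simp add: numeral_2_eq_2)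
  have sqp: "vb_eq n (?s @ ?q @ ?p) (?q @ ?p @ ?t)"
    using vb_eq_rev [OF pqs] by (simp add: winv_def sg_def)
  have pqp: "vb_eq n (?p @ ?q @ ?p) (?q @ ?p @ ?q)"
    using rho_braid [OF k] by (simp add: numeral_2_eq_2)
  have sts: "vb_eq n (?s @ ?t @ ?s) (?t @ ?s @ ?t)"
    using vb_eq_winv [OF sigma_braid [OF k]] by (simp add: numeral_2_eq_2)
  have "vb_eq n (?p @ ?s @ ?q @ ?p @ ?s @ ?q @ ?q @ ?t) (?p @ ?s @ ?q @ ?p @ ?s @ ?t)"
    using assms rho_square_delete [of 2 n "?p @ ?s @ ?q @ ?p @ ?s" ?t] by simp
  also have "vb_eq n (?p @ ?s @ ?q @ ?p @ ?s @ ?t) (?p @ ?q @ ?p @ ?t @ ?s @ ?t)"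
    using vb_eq.cong [OF sqp, of ?p "?s @ ?t"] by simp
  finally have lhs: "vb_eq n (lam 1 2 @ lam 1 3 @ lam 2 3) (?p @ ?q @ ?p @ ?t @ ?s @ ?t)"
    unfolding lams by simp
  have "vb_eq n (?q @ ?t @ ?q @ ?p @ ?s @ ?q @ ?p @ ?s) (?q @ ?t @ ?q @ ?p @ ?q @ ?p @ ?t @ ?s)"
    using vb_eq.cong [OF sqp, of "?q @ ?t @ ?q @ ?p" ?s] by simp
  also have "vb_eq n (?q @ ?t @ ?q @ ?p @ ?q @ ?p @ ?t @ ?s)
      (?q @ ?t @ ?p @ ?q @ ?p @ ?p @ ?t @ ?s)"
    using vb_eq.cong [OF pqp, of "?q @ ?t" "?p @ ?t @ ?s"] by (simp add: vb_eq_commute)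
  also have "vb_eq n (?q @ ?t @ ?p @ ?q @ ?p @ ?p @ ?t @ ?s) (?q @ ?t @ ?p @ ?q @ ?t @ ?s)"
    using assms rho_square_delete [of 1 n "?q @ ?t @ ?p @ ?q" "?t @ ?s"] by simp
  also have "vb_eq n (?q @ ?t @ ?p @ ?q @ ?t @ ?s) (?q @ ?p @ ?q @ ?s @ ?t @ ?s)"
    using vb_eq.cong [OF pqs, of ?q "?t @ ?s"] by (simp add: vb_eq_commute)
  also have "vb_eq n (?q @ ?p @ ?q @ ?s @ ?t @ ?s) (?p @ ?q @ ?p @ ?t @ ?s @ ?t)"
    using vb_eq.cong [OF pqp, of "[]" "?s @ ?t @ ?s"] vb_eq.cong [OF sts, of "?p @ ?q @ ?p" "[]"]
    by simp (blast intro: vb_eq.trans vb_eq.sym)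
  finally have rhs: "vb_eq n (lam 2 3 @ lam 1 3 @ lam 1 2) (?p @ ?q @ ?p @ ?t @ ?s @ ?t)"
    unfolding lams by simp
  from lhs rhs show ?thesis
    by (blast intro: vb_eq.trans vb_eq.sym)
qed

lemma lam_commute_base:
  assumes "4 \<le> n"
  shows "vb_eq n (lam 1 2 @ lam 3 4) (lam 3 4 @ lam 1 2)"
proof (rule far_words_commute, intro ballI)
  fix x y assume "x \<in> set (lam 1 2)" "y \<in> set (lam 3 4)"
  then show "far_letters n x y"
    using assms gen_index_lam [of 1 2 x] gen_index_lam [of 3 4 y] by (auto simp: far_letters_def)
qed

lemma lam_rel3:
  assumes "3 \<le> n" "a \<in> {1..n}" "b \<in> {1..n}" "c \<in> {1..n}" "distinct [a, b, c]"
  shows "vb_eq n (lam a b @ lam a c @ lam b c) (lam b c @ lam a c @ lam a b)"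
proof -
  obtain ks where ks: "set ks \<subseteq> {1..<n}"
    and "map (fold rho_perm ks) [0+1..<0+1+length [a, b, c]] = [a, b, c]"
    using rho_perms_realise_injection [OF assms(5), of 0 n] assms(2-4) by auto
  then have f: "fold rho_perm ks 1 = a" "fold rho_perm ks 2 = b" "fold rho_perm ks 3 = c"
    by (simp_all add: upt_rec numeral_eq_Suc)
  have "vb_eq n (lams [(1, 2), (1, 3), (2, 3)]) (lams [(2, 3), (1, 3), (1, 2)])"
    using lam_rel3_base [OF assms(1)] by (simp add: lams_def)
  from lams_relation_transport [OF ks _ _ this] show ?thesis
    unfolding f [symmetric] using assms by (simp add: lams_def lam_indices_def)
qed

lemma lam_commute:
  assumes "a \<in> {1..n}" "b \<in> {1..n}" "c \<in> {1..n}" "d \<in> {1..n}" "distinct [a, b, c, d]"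
  shows "vb_eq n (lam a b @ lam c d) (lam c d @ lam a b)"
proof -
  have "4 \<le> n"
    using card_mono [of "{1..n}" "set [a, b, c, d]"] distinct_card [OF assms(5)] assms by auto
  obtain ks where ks: "set ks \<subseteq> {1..<n}"
    and "map (fold rho_perm ks) [0+1..<0+1+length [a, b, c, d]] = [a, b, c, d]"
    using rho_perms_realise_injection [OF assms(5), of 0 n] assms(1-4) by auto
  then have f: "fold rho_perm ks 1 = a" "fold rho_perm ks 2 = b" "fold rho_perm ks 3 = c"
    "fold rho_perm ks 4 = d"
    by (simp_all add: upt_rec numeral_eq_Suc)
  have "vb_eq n (lams [(1, 2), (3, 4)]) (lams [(3, 4), (1, 2)])"
    using lam_commute_base [OF \<open>4 \<le> n\<close>] by (simp add: lams_def)
  from lams_relation_transport [OF ks _ _ this] show ?thesis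
    unfolding f [symmetric] using \<open>4 \<le> n\<close> by (simp add: lams_def lam_indices_def)
qed

theorem lemma5:
  fixes n i j k l :: nat
  assumes "n \<ge> 3"
  shows
   "(i \<in> {1..n} \<and> j \<in> {1..n} \<and> k \<in> {1..n} \<and> l \<in> {1..n} \<and>
     distinct [i, j, k, l] \<and> max i j < max k l \<longrightarrow>
       vb_eq n (wconj (lam k l) (lam i j)) (lam k l) \<and>
       vb_eq n (wconj (lam k l) (winv (lam i j))) (lam k l))
  \<and> (i \<in> {1..n} \<and> j \<in> {1..n} \<and> k \<in> {1..n} \<and> (i < j \<and> j < k \<or> j < i \<and> i < k) \<longrightarrow>
       vb_eq n (wconj (lam i k) (lam i j))
               (wconj (lam k j) (lam i j) @ lam i k @ winv (lam k j)) \<and>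
       vb_eq n (wconj (lam i k) (winv (lam i j)))
               (winv (lam k j) @ lam i k @ wconj (lam k j) (winv (lam i j))) \<and>
       vb_eq n (wconj (lam k i) (lam i j))
               (lam k j @ lam k i @ winv (wconj (lam k j) (lam i j))) \<and>
       vb_eq n (wconj (lam k i) (winv (lam i j)))
               (winv (wconj (lam k j) (winv (lam i j))) @ lam k i @ lam k j) \<and>
       vb_eq n (wconj (lam j k) (lam i j))
               (lam i k @ lam j k @ lam k j @ winv (lam i k) @ winv (wconj (lam k j) (lam i j))) \<and>
       vb_eq n (wconj (lam j k) (winv (lam i j)))
               (winv (wconj (lam k j) (winv (lam i j))) @ winv (lam i k) @ lam k j @ lam j k @ lam i k))"
proof (intro conjI impI)
  \<comment> \<open>only distinctness is needed here, not the comparison of the maxima\<close>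
  assume "i \<in> {1..n} \<and> j \<in> {1..n} \<and> k \<in> {1..n} \<and> l \<in> {1..n} \<and>
    distinct [i, j, k, l] \<and> max i j < max k l"
  then have "vb_eq n (lam k l @ lam i j) (lam i j @ lam k l)"
    by (intro lam_commute) auto
  then show "vb_eq n (wconj (lam k l) (lam i j)) (lam k l)"
    and "vb_eq n (wconj (lam k l) (winv (lam i j))) (lam k l)"
    by (rule wconj_commuting)+
next
  assume "i \<in> {1..n} \<and> j \<in> {1..n} \<and> k \<in> {1..n} \<and> (i < j \<and> j < k \<or> j < i \<and> i < k)"
  then have ikj: "vb_eq n (lam i k @ lam i j @ lam k j) (lam k j @ lam i j @ lam i k)"
    and kij: "vb_eq n (lam k i @ lam k j @ lam i j) (lam i j @ lam k j @ lam k i)"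
    and ijk: "vb_eq n (lam i j @ lam i k @ lam j k) (lam j k @ lam i k @ lam i j)"
    using assms by (auto intro!: lam_rel3)
  show "vb_eq n (wconj (lam i k) (lam i j)) (wconj (lam k j) (lam i j) @ lam i k @ winv (lam k j))"
    using ikj by (rule rel3_wconj_by_middle)
  show "vb_eq n (wconj (lam i k) (winv (lam i j)))
      (winv (lam k j) @ lam i k @ wconj (lam k j) (winv (lam i j)))"
    using ikj by (rule rel3_wconj_inv_by_middle)
  show "vb_eq n (wconj (lam k i) (lam i j)) (lam k j @ lam k i @ winv (wconj (lam k j) (lam i j)))"
    using kij by (rule rel3_wconj_by_last)
  show "vb_eq n (wconj (lam k i) (winv (lam i j)))
      (winv (wconj (lam k j) (winv (lam i j))) @ lam k i @ lam k j)"
    using kij by (rule rel3_wconj_inv_by_last)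
  show "vb_eq n (wconj (lam j k) (lam i j))
      (lam i k @ lam j k @ lam k j @ winv (lam i k) @ winv (wconj (lam k j) (lam i j)))"
    using ikj ijk by (rule rel3_pair_wconj)
  show "vb_eq n (wconj (lam j k) (winv (lam i j)))
      (winv (wconj (lam k j) (winv (lam i j))) @ winv (lam i k) @ lam k j @ lam j k @ lam i k)"
    using ikj ijk by (rule rel3_pair_wconj_inv)
qed

end
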